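(* Let $X,Y$ be compact topological spaces, $\mu\in\mathcal{P}(X)$, $\nu\in\mathcal{P}(Y)$, $c\in C(X\times Y)$. The operator $S$ has a fixed point $u_*\in C(X)$. Moreover, $u_*$ is uniquely determined $\mu$-almost everywhere up to an additive constant; more precisely, there is a unique fixed point of $S$ in $S(C(X))/\mathbb{R}$ (i.e. fixed points in the image of $S$ are unique up to additive constants).
   Context: For $u\in C(X)$ set $v[u](y)=\log\int_Xe^{-c(x,y)-u(x)}d\mu(x)$, and for $v\in C(Y)$ set $u[v](x)=\log\int_Ye^{-c(x,y)-v(y)}d\nu(y)$. $S:C(X)\to C(X)$ is $S(u)=u[v[u]]$. Note $S(u+\lambda)=S(u)+\lambda$ for constants $\lambda$. *)

theory Defs
  imports "HOL-Probability.Probability"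
begin

definition v_of :: "('a \<times> 'b \<Rightarrow> real) \<Rightarrow> 'a measure \<Rightarrow> ('a \<Rightarrow> real) \<Rightarrow> 'b \<Rightarrow> real" where
  "v_of c \<mu> u y = ln (\<integral>x. exp (- c (x, y) - u x) \<partial>\<mu>)"

definition u_of :: "('a \<times> 'b \<Rightarrow> real) \<Rightarrow> 'b measure \<Rightarrow> ('b \<Rightarrow> real) \<Rightarrow> 'a \<Rightarrow> real" where
  "u_of c \<nu> v x = ln (\<integral>y. exp (- c (x, y) - v y) \<partial>\<nu>)"

definition S_op :: "('a \<times> 'b \<Rightarrow> real) \<Rightarrow> 'a measure \<Rightarrow> 'b measure \<Rightarrow> ('a \<Rightarrow> real) \<Rightarrow> 'a \<Rightarrow> real" where
  "S_op c \<mu> \<nu> u = u_of c \<nu> (v_of c \<mu> u)"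

end

theory Submission
  imports Defs
begin

text \<open>Tilting two densities \<open>e\<^sup>a\<close>, \<open>e\<^sup>b\<close> with
  \<open>|a - b| \<le> \<Gamma>\<close> by the same factor \<open>e\<^sup>-\<^sup>h\<close> changes their log-masses by amounts that differ by
  at most \<open>(1 - e\<^sup>-\<^sup>2\<^sup>\<Gamma>) osc h\<close>, because \<open>e\<^sup>a\<close> dominates \<open>e\<^sup>-\<^sup>2\<^sup>\<Gamma>\<close> times the
  normalisation of \<open>e\<^sup>b\<close>. Hence \<open>S\<close> contracts the oscillation of differences by a factor
  \<open>L < 1\<close>. This gives uniqueness of continuous fixed points up to constants, and makes the
  normalised iterates of \<open>u \<mapsto> S u - S u x\<^sub>0\<close> converge uniformly to some \<open>W\<close> with
  \<open>S W = W + k\<close>. Integrating \<open>e\<^sup>-\<^sup>c\<^sup>-\<^sup>W\<^sup>-\<^sup>v\<^sup>[\<^sup>W\<^sup>]\<close> over \<open>X \<times> Y\<close> in both orders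
  gives \<open>1 = e\<^sup>k\<close>, so \<open>k = 0\<close>.\<close>

definition log_integral_exp :: "'a measure \<Rightarrow> ('a \<Rightarrow> real) \<Rightarrow> real" where
  "log_integral_exp M f = ln (\<integral>x. exp (f x) \<partial>M)"

definition oscillation_le :: "('a \<Rightarrow> real) \<Rightarrow> real \<Rightarrow> bool" where
  "oscillation_le h K \<longleftrightarrow> (\<forall>x x'. h x - h x' \<le> K)"

lemma bounded_range_continuous_on_compact_UNIV:
  fixes f :: "'a::topological_space \<Rightarrow> 'b::metric_space"
  assumes "compact (UNIV :: 'a set)" "continuous_on UNIV f"
  shows "bounded (range f)"
  using compact_imp_bounded[OF compact_continuous_image[OF assms(2,1)]] .

lemma borel_measurable_continuous_on_UNIV:
  assumes "sets M = sets borel" "continuous_on UNIV f"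
  shows "f \<in> borel_measurable M"
  using borel_measurable_continuous_onI[OF assms(2)] measurable_cong_sets[OF assms(1) refl] by blast

lemma bounded_range_abs_le:
  fixes f :: "'a \<Rightarrow> real"
  assumes "bounded (range f)"
  obtains B where "\<And>x. \<bar>f x\<bar> \<le> B"
  using assms unfolding bounded_real by auto

lemma continuous_on_compact_uniform_in_fibre:
  fixes G :: "'q::topological_space \<times> 'p::topological_space \<Rightarrow> real"
  assumes "compact (UNIV :: 'q set)" "continuous_on UNIV G" "0 < e"
  obtains V where "open V" "p\<^sub>0 \<in> V" "\<And>p q. p \<in> V \<Longrightarrow> \<bar>G (q, p) - G (q, p\<^sub>0)\<bar> < e"
proof -
  let ?W = "{z :: 'p \<times> 'q. \<bar>G (snd z, fst z) - G (snd z, p\<^sub>0)\<bar> < e}"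
  have c1: "continuous_on UNIV (\<lambda>z :: 'p \<times> 'q. G (snd z, fst z))"
    by (rule continuous_on_compose2[OF assms(2)]) (auto intro!: continuous_intros)
  have c2: "continuous_on UNIV (\<lambda>z :: 'p \<times> 'q. G (snd z, p\<^sub>0))"
    by (rule continuous_on_compose2[OF assms(2)]) (auto intro!: continuous_intros)
  have "open ?W" by (rule open_Collect_less) (auto intro!: continuous_intros c1 c2)
  moreover have "{p\<^sub>0} \<times> UNIV \<subseteq> ?W" using assms(3) by auto
  ultimately have "\<exists>V. p\<^sub>0 \<in> V \<and> open V \<and> V \<times> UNIV \<subseteq> ?W"
    by (rule Elementary_Topology.tube_lemma[OF assms(1)])
  then obtain V where "p\<^sub>0 \<in> V" "open V" "V \<times> UNIV \<subseteq> ?W" by blast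
  then have "\<bar>G (q, p) - G (q, p\<^sub>0)\<bar> < e" if "p \<in> V" for p q
    using that by (auto dest!: subsetD[where c = "(p, q)"])
  with \<open>open V\<close> \<open>p\<^sub>0 \<in> V\<close> show ?thesis by (rule that)
qed

lemma ln_gap_le_of_mixture_bound:
  fixes \<delta> H m l l' :: real
  assumes "0 \<le> \<delta>" "\<delta> \<le> 1" "l' \<le> -m"
    and mix: "(1 - \<delta>) * exp (-H) + \<delta> * exp l' \<le> exp l"
  shows "l' - l \<le> (1 - \<delta>) * (H - m)"
proof -
  have "exp ((1 - \<delta>) * (-H) + \<delta> * l') \<le> (1 - \<delta>) * exp (-H) + \<delta> * exp l'"
    using convex_onD[OF exp_convex, of \<delta> "-H" l'] assms(1,2) by simp
  with mix have "exp ((1 - \<delta>) * (-H) + \<delta> * l') \<le> exp l" by linarith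
  then have "(1 - \<delta>) * (-H) + \<delta> * l' \<le> l" by simp
  moreover have "(1 - \<delta>) * (l' + H) \<le> (1 - \<delta>) * (H - m)"
    using assms(2,3) by (intro mult_left_mono) auto
  ultimately show ?thesis by (simp add: algebra_simps)
qed

context prob_space
begin

lemma integrable_exp_bounded:
  fixes f :: "'a \<Rightarrow> real"
  assumes "f \<in> borel_measurable M" "bounded (range f)"
  shows "integrable M (\<lambda>x. exp (f x))"
proof -
  obtain B where "\<And>x. \<bar>f x\<bar> \<le> B" using bounded_range_abs_le[OF assms(2)] by blast
  then have "AE x in M. norm (exp (f x)) \<le> exp B" by (auto simp: abs_le_iff)
  then show ?thesis using assms(1) by (intro integrable_const_bound) auto
qed

lemma integral_exp_pos:
  fixes f :: "'a \<Rightarrow> real"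
  assumes "f \<in> borel_measurable M" "bounded (range f)"
  shows "0 < (\<integral>x. exp (f x) \<partial>M)"
proof -
  obtain B where B: "\<And>x. \<bar>f x\<bar> \<le> B" using bounded_range_abs_le[OF assms(2)] by blast
  have "exp (-B) = (\<integral>x. exp (-B) \<partial>M)" by (simp add: prob_space)
  also have "\<dots> \<le> (\<integral>x. exp (f x) \<partial>M)"
    using B by (intro integral_mono integrable_exp_bounded assms) (auto simp: abs_le_iff minus_le_iff)
  finally show ?thesis by (rule less_le_trans[OF exp_gt_zero])
qed

lemma exp_log_integral_exp:
  fixes f :: "'a \<Rightarrow> real"
  assumes "f \<in> borel_measurable M" "bounded (range f)"
  shows "exp (log_integral_exp M f) = (\<integral>x. exp (f x) \<partial>M)"
  using integral_exp_pos[OF assms] by (simp add: log_integral_exp_def)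

lemma integral_exp_le_shift:
  fixes f g :: "'a \<Rightarrow> real"
  assumes "f \<in> borel_measurable M" "bounded (range f)"
    and "g \<in> borel_measurable M" "bounded (range g)"
    and "\<And>x. f x \<le> g x + e"
  shows "(\<integral>x. exp (f x) \<partial>M) \<le> exp e * (\<integral>x. exp (g x) \<partial>M)"
proof -
  have "(\<integral>x. exp (f x) \<partial>M) \<le> (\<integral>x. exp e * exp (g x) \<partial>M)"
    using assms(5) by (intro integral_mono integrable_exp_bounded integrable_mult_right assms(1-4))
      (simp add: mult_exp_exp add.commute)
  then show ?thesis by simp
qed

lemma log_integral_exp_le_shift:
  fixes f g :: "'a \<Rightarrow> real"
  assumes "f \<in> borel_measurable M" "bounded (range f)"
    and "g \<in> borel_measurable M" "bounded (range g)"
    and "\<And>x. f x \<le> g x + e"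
  shows "log_integral_exp M f \<le> log_integral_exp M g + e"
proof -
  have "log_integral_exp M f \<le> ln (exp e * (\<integral>x. exp (g x) \<partial>M))"
    unfolding log_integral_exp_def
    using integral_exp_le_shift[OF assms] integral_exp_pos[OF assms(1,2)] by simp
  also have "\<dots> = log_integral_exp M g + e"
    using integral_exp_pos[OF assms(3,4)] by (simp add: ln_mult log_integral_exp_def)
  finally show ?thesis .
qed

lemma abs_log_integral_exp_diff_le:
  fixes f g :: "'a \<Rightarrow> real"
  assumes "f \<in> borel_measurable M" "bounded (range f)"
    and "g \<in> borel_measurable M" "bounded (range g)"
    and "\<And>x. \<bar>f x - g x\<bar> \<le> e"
  shows "\<bar>log_integral_exp M f - log_integral_exp M g\<bar> \<le> e"
proof -
  have "f x \<le> g x + e" "g x \<le> f x + e" for x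
    using assms(5)[of x] by (auto simp: abs_le_iff)
  then show ?thesis
    using log_integral_exp_le_shift[OF assms(1-4)] log_integral_exp_le_shift[OF assms(3,4,1,2)]
    by (smt (verit))
qed

text \<open>The measure \<open>e\<^sup>a M\<close> dominates \<open>e\<^sup>-\<^sup>\<Gamma> e\<^sup>b M\<close>, so after normalisation it is a
  mixture with weight at least \<open>e\<^sup>-\<^sup>2\<^sup>\<Gamma>\<close> of the normalisation of \<open>e\<^sup>b M\<close> and of some other
  probability measure; on the latter \<open>e\<^sup>-\<^sup>h \<ge> e\<^sup>-\<^sup>H\<close>.\<close>
lemma integral_exp_mixture_bound:
  fixes a b h :: "'a \<Rightarrow> real"
  assumes a: "a \<in> borel_measurable M" "bounded (range a)"
    and b: "b \<in> borel_measurable M" "bounded (range b)"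
    and h: "h \<in> borel_measurable M" "bounded (range h)"
    and ab: "\<And>x. \<bar>a x - b x\<bar> \<le> \<Gamma>" and hH: "\<And>x. h x \<le> H"
  shows "(1 - exp (-2*\<Gamma>)) * exp (-H)
           + exp (-2*\<Gamma>) * ((\<integral>x. exp (b x - h x) \<partial>M) / (\<integral>x. exp (b x) \<partial>M))
         \<le> (\<integral>x. exp (a x - h x) \<partial>M) / (\<integral>x. exp (a x) \<partial>M)"
proof -
  have ah: "(\<lambda>x. a x - h x) \<in> borel_measurable M" "bounded (range (\<lambda>x. a x - h x))"
    using a h by (auto intro: bounded_minus_comp)
  have bh: "(\<lambda>x. b x - h x) \<in> borel_measurable M" "bounded (range (\<lambda>x. b x - h x))"
    using b h by (auto intro: bounded_minus_comp)
  define P where "P = (\<integral>x. exp (a x) \<partial>M)"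
  define Q where "Q = (\<integral>x. exp (b x) \<partial>M)"
  define Ph where "Ph = (\<integral>x. exp (a x - h x) \<partial>M)"
  define Qh where "Qh = (\<integral>x. exp (b x - h x) \<partial>M)"
  have pos: "0 < P" "0 < Q"
    unfolding P_def Q_def using integral_exp_pos a b by auto
  have "0 \<le> (\<integral>x. (exp (a x) - exp (-\<Gamma>) * exp (b x)) * (exp (- h x) - exp (-H)) \<partial>M)"
  proof (intro integral_nonneg_AE AE_I2 mult_nonneg_nonneg)
    fix x
    show "0 \<le> exp (a x) - exp (-\<Gamma>) * exp (b x)"
      using ab[of x] by (simp add: mult_exp_exp abs_le_iff)
    show "0 \<le> exp (- h x) - exp (-H)" using hH[of x] by simp
  qed
  also have "\<dots> = (\<integral>x. (exp (a x - h x) - exp (-\<Gamma>) * exp (b x - h x))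
      - exp (-H) * (exp (a x) - exp (-\<Gamma>) * exp (b x)) \<partial>M)"
    by (intro Bochner_Integration.integral_cong) (simp_all add: algebra_simps exp_diff exp_minus divide_inverse)
  also have "\<dots> = (Ph - exp (-\<Gamma>) * Qh) - exp (-H) * (P - exp (-\<Gamma>) * Q)"
    unfolding P_def Q_def Ph_def Qh_def
    using integrable_exp_bounded[OF a] integrable_exp_bounded[OF b]
      integrable_exp_bounded[OF ah] integrable_exp_bounded[OF bh] by simp
  finally have dominate: "exp (-H) * (P - exp (-\<Gamma>) * Q) + exp (-\<Gamma>) * Qh \<le> Ph" by simp
  have "P \<le> exp \<Gamma> * Q"
    unfolding P_def Q_def using ab by (intro integral_exp_le_shift a b) (smt (verit))
  then have "exp (-2*\<Gamma>) * P \<le> exp (-2*\<Gamma>) * exp \<Gamma> * Q" by simp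
  then have weight: "exp (-2*\<Gamma>) \<le> exp (-\<Gamma>) * Q / P"
    using pos by (simp add: field_simps mult_exp_exp)
  have "exp (-H) * Q \<le> Qh"
    unfolding Q_def Qh_def using hH integral_exp_le_shift[OF b bh, of H] by (simp add: exp_minus field_simps)
  then have "exp (-H) \<le> Qh / Q" using pos by (simp add: field_simps)
  moreover have "(1 - \<delta>) * e + \<delta> * E \<le> (1 - \<theta>) * e + \<theta> * E"
    if "\<delta> \<le> \<theta>" "e \<le> E" for \<delta> \<theta> e E :: real
    using mult_right_mono[OF that(1), of "E - e"] that(2) by (simp add: algebra_simps)
  ultimately have "(1 - exp (-2*\<Gamma>)) * exp (-H) + exp (-2*\<Gamma>) * (Qh / Q)
      \<le> (1 - exp (-\<Gamma>) * Q / P) * exp (-H) + exp (-\<Gamma>) * Q / P * (Qh / Q)"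
    using weight by blast
  also have "\<dots> = (exp (-H) * (P - exp (-\<Gamma>) * Q) + exp (-\<Gamma>) * Qh) / P"
    using pos by (simp add: field_simps)
  also have "\<dots> \<le> Ph / P"
    using dominate pos by (intro divide_right_mono) auto
  finally show ?thesis unfolding P_def Q_def Ph_def Qh_def .
qed

lemma log_integral_exp_tilt_contraction:
  fixes a b h :: "'a \<Rightarrow> real"
  assumes a: "a \<in> borel_measurable M" "bounded (range a)"
    and b: "b \<in> borel_measurable M" "bounded (range b)"
    and h: "h \<in> borel_measurable M" "bounded (range h)"
    and ab: "\<And>x. \<bar>a x - b x\<bar> \<le> \<Gamma>" and hm: "\<And>x. m \<le> h x" and hH: "\<And>x. h x \<le> H"
  shows "(log_integral_exp M (\<lambda>x. b x - h x) - log_integral_exp M b)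
           - (log_integral_exp M (\<lambda>x. a x - h x) - log_integral_exp M a)
         \<le> (1 - exp (-2*\<Gamma>)) * (H - m)"
proof -
  have ah: "(\<lambda>x. a x - h x) \<in> borel_measurable M" "bounded (range (\<lambda>x. a x - h x))"
    using a h by (auto intro: bounded_minus_comp)
  have bh: "(\<lambda>x. b x - h x) \<in> borel_measurable M" "bounded (range (\<lambda>x. b x - h x))"
    using b h by (auto intro: bounded_minus_comp)
  have "0 \<le> \<Gamma>" using ab[of undefined] by linarith
  have "log_integral_exp M (\<lambda>x. b x - h x) \<le> log_integral_exp M b + - m"
    using hm by (intro log_integral_exp_le_shift bh b) (simp add: algebra_simps)
  moreover have "exp (log_integral_exp M f - log_integral_exp M g)
      = (\<integral>x. exp (f x) \<partial>M) / (\<integral>x. exp (g x) \<partial>M)"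
    if "f \<in> borel_measurable M" "bounded (range f)" "g \<in> borel_measurable M" "bounded (range g)"
    for f g :: "'a \<Rightarrow> real"
    using that by (simp add: exp_diff exp_log_integral_exp)
  ultimately show ?thesis
    using \<open>0 \<le> \<Gamma>\<close> integral_exp_mixture_bound[OF a b h ab hH] a b ah bh
    by (intro ln_gap_le_of_mixture_bound) auto
qed

lemma log_integral_exp_kernel_oscillation:
  fixes G :: "'a \<times> 'p \<Rightarrow> real" and f1 f2 :: "'a \<Rightarrow> real"
  assumes G: "\<And>p. (\<lambda>q. G (q, p)) \<in> borel_measurable M" "\<And>q p. \<bar>G (q, p)\<bar> \<le> C"
    and f1: "f1 \<in> borel_measurable M" "bounded (range f1)"
    and f2: "f2 \<in> borel_measurable M" "bounded (range f2)"
    and osc: "oscillation_le (\<lambda>q. f1 q - f2 q) K"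
  shows "oscillation_le
    (\<lambda>p. log_integral_exp M (\<lambda>q. G (q, p) - f1 q) - log_integral_exp M (\<lambda>q. G (q, p) - f2 q))
    ((1 - exp (-4*C)) * K)"
  unfolding oscillation_le_def
proof (intro allI)
  fix p p'
  define h where "h q = f1 q - f2 q" for q
  have h: "h \<in> borel_measurable M" "bounded (range h)"
    unfolding h_def using f1 f2 by (auto intro: bounded_minus_comp)
  have Gb: "bounded (range (\<lambda>q. G (q, p)))" for p
    using G(2) unfolding bounded_real by blast
  have kernel: "(\<lambda>q. G (q, p) - f2 q) \<in> borel_measurable M"
    "bounded (range (\<lambda>q. G (q, p) - f2 q))" for p
    using G(1) f2 Gb by (auto intro: bounded_minus_comp)
  have bdd: "bdd_above (range h)" using h(2) by (rule bounded_imp_bdd_above)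
  define H where "H = (SUP q. h q)"
  have hH: "h q \<le> H" for q unfolding H_def using bdd by (intro cSUP_upper) simp_all
  have hm: "H - K \<le> h q" for q
  proof -
    have "H \<le> h q + K"
      unfolding H_def using osc by (intro cSUP_least) (auto simp: oscillation_le_def h_def add.commute diff_le_eq)
    then show ?thesis by simp
  qed
  have "\<bar>(G (q, p') - f2 q) - (G (q, p) - f2 q)\<bar> \<le> 2 * C" for q
    using G(2)[of q p] G(2)[of q p'] by (simp add: abs_le_iff)
  from log_integral_exp_tilt_contraction[OF kernel kernel h this hm hH]
  show "log_integral_exp M (\<lambda>q. G (q, p) - f1 q) - log_integral_exp M (\<lambda>q. G (q, p) - f2 q)
      - (log_integral_exp M (\<lambda>q. G (q, p') - f1 q) - log_integral_exp M (\<lambda>q. G (q, p') - f2 q))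
      \<le> (1 - exp (-4*C)) * K"
    by (simp add: h_def)
qed

end

lemma continuous_on_log_integral_exp:
  fixes G :: "'a::topological_space \<times> 'p::topological_space \<Rightarrow> real" and f :: "'a \<Rightarrow> real"
  assumes M: "prob_space M" and cpt: "compact (UNIV :: 'a set)" and sets: "sets M = sets borel"
    and G: "continuous_on UNIV G"
    and f: "f \<in> borel_measurable M" "bounded (range f)"
  shows "continuous_on UNIV (\<lambda>p. log_integral_exp M (\<lambda>q. G (q, p) - f q))"
  unfolding continuous_on_def
proof (intro ballI)
  fix p0 :: 'p
  let ?g = "\<lambda>p. log_integral_exp M (\<lambda>q. G (q, p) - f q)"
  have Gp: "continuous_on UNIV (\<lambda>q. G (q, p))" for p
    by (rule continuous_on_compose2[OF G]) (auto intro!: continuous_intros)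
  have slice: "(\<lambda>q. G (q, p) - f q) \<in> borel_measurable M"
    "bounded (range (\<lambda>q. G (q, p) - f q))" for p
    using borel_measurable_continuous_on_UNIV[OF sets Gp] f(1) apply measurable
    using bounded_range_continuous_on_compact_UNIV[OF cpt Gp] f(2) by (rule bounded_minus_comp)
  show "(?g \<longlongrightarrow> ?g p0) (at p0 within UNIV)"
    unfolding tendsto_iff
  proof (intro allI impI)
    fix e :: real assume "0 < e"
    then obtain V where V: "open V" "p0 \<in> V" "\<And>p q. p \<in> V \<Longrightarrow> \<bar>G (q, p) - G (q, p0)\<bar> < e / 2"
      using continuous_on_compact_uniform_in_fibre[OF cpt G, of "e / 2"] by auto
    have "dist (?g p) (?g p0) < e" if "p \<in> V" for p
    proof -
      have "\<bar>?g p - ?g p0\<bar> \<le> e / 2"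
        using V(3)[OF that] by (intro prob_space.abs_log_integral_exp_diff_le[OF M] slice) (simp add: less_imp_le)
      then show ?thesis using \<open>0 < e\<close> by (simp add: dist_real_def)
    qed
    then show "\<forall>\<^sub>F p in at p0 within UNIV. dist (?g p) (?g p0) < e"
      unfolding eventually_at_topological using V(1,2) by blast
  qed
qed

lemma oscillation_le_diff_const [simp]:
  "oscillation_le (\<lambda>x. h x - d) K \<longleftrightarrow> oscillation_le h K"
  by (simp add: oscillation_le_def)

lemma oscillation_le_bounded:
  fixes h :: "'a \<Rightarrow> real"
  assumes "bounded (range h)"
  obtains K where "oscillation_le h K"
proof -
  obtain B where B: "\<And>x. \<bar>h x\<bar> \<le> B" using bounded_range_abs_le[OF assms] by blast
  have "h x - h x' \<le> 2 * B" for x x'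
    using B[of x] B[of x'] by (simp add: abs_le_iff)
  then have "oscillation_le h (2 * B)" unfolding oscillation_le_def by blast
  then show ?thesis by (rule that)
qed

lemma abs_le_oscillation_le:
  assumes "oscillation_le h K" "h x0 = 0"
  shows "\<bar>h x\<bar> \<le> K"
proof -
  have "h x - h x0 \<le> K" "h x0 - h x \<le> K" using assms(1) unfolding oscillation_le_def by blast+
  then show ?thesis using assms(2) by (simp add: abs_le_iff)
qed

definition oscillation_contraction :: "real \<Rightarrow> (('a::topological_space \<Rightarrow> real) \<Rightarrow> 'a \<Rightarrow> real) \<Rightarrow> bool" where
  "oscillation_contraction L T \<longleftrightarrow> (\<forall>a b K. continuous_on UNIV a \<longrightarrow> continuous_on UNIV b
     \<longrightarrow> oscillation_le (\<lambda>x. a x - b x) K \<longrightarrow> oscillation_le (\<lambda>x. T a x - T b x) (L * K))"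

lemma oscillation_contractionD:
  assumes "oscillation_contraction L T" "continuous_on UNIV a" "continuous_on UNIV b"
    "oscillation_le (\<lambda>x. a x - b x) K"
  shows "oscillation_le (\<lambda>x. T a x - T b x) (L * K)"
  using assms unfolding oscillation_contraction_def by blast

lemma oscillation_contraction_fixed_points_differ_by_const:
  fixes T :: "('a::topological_space \<Rightarrow> real) \<Rightarrow> 'a \<Rightarrow> real"
  assumes cpt: "compact (UNIV :: 'a set)" and "L < 1"
    and contr: "oscillation_contraction L T"
    and a: "continuous_on UNIV a" "T a = a" and b: "continuous_on UNIV b" "T b = b"
  shows "\<exists>k. \<forall>x. a x = b x + k"
proof -
  define h where "h = (\<lambda>x. a x - b x)"
  have hc: "continuous_on UNIV h" unfolding h_def using a b by (intro continuous_intros)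
  obtain xa where xa: "\<And>x. h x \<le> h xa"
    using continuous_attains_sup[OF cpt UNIV_not_empty hc] by blast
  obtain xb where xb: "\<And>x. h xb \<le> h x"
    using continuous_attains_inf[OF cpt UNIV_not_empty hc] by blast
  define K where "K = h xa - h xb"
  have "oscillation_le h K" unfolding oscillation_le_def K_def using xa xb by (meson diff_mono)
  then have "oscillation_le h (L * K)" using oscillation_contractionD[OF contr a(1) b(1)] a(2) b(2) by (simp add: h_def)
  then have "(1 - L) * K \<le> 0" unfolding oscillation_le_def K_def by (simp add: algebra_simps)
  moreover have "0 \<le> K" unfolding K_def using xa[of xb] by simp
  ultimately have "K = 0" using \<open>L < 1\<close> by (simp add: mult_le_0_iff)
  then have "h x = h xa" for x using xa[of x] xb[of x] unfolding K_def by linarith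
  then have "\<forall>x. a x = b x + h xa" unfolding h_def by (metis add.commute diff_add_cancel)
  then show ?thesis ..
qed

lemma uniform_limit_of_geometric_increments:
  fixes w :: "nat \<Rightarrow> 'a \<Rightarrow> real"
  assumes "0 \<le> L" "L < 1" and inc: "\<And>n x. \<bar>w (Suc n) x - w n x\<bar> \<le> L ^ n * K"
  shows "uniform_limit UNIV w (\<lambda>x. w 0 x + (\<Sum>i. w (Suc i) x - w i x)) sequentially"
proof -
  have "summable (\<lambda>n. L ^ n * K)" using assms(1,2) by (intro summable_mult2 summable_geometric) simp
  then have "uniform_limit UNIV (\<lambda>n x. \<Sum>i<n. w (Suc i) x - w i x) (\<lambda>x. \<Sum>i. w (Suc i) x - w i x) sequentially"
    using inc by (intro Weierstrass_m_test) simp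
  then have "uniform_limit UNIV (\<lambda>n x. w 0 x + (\<Sum>i<n. w (Suc i) x - w i x))
      (\<lambda>x. w 0 x + (\<Sum>i. w (Suc i) x - w i x)) sequentially"
    by (intro uniform_limit_add uniform_limit_const) auto
  moreover have "w 0 x + (\<Sum>i<n. w (Suc i) x - w i x) = w n x" for n x
    using sum_lessThan_telescope[of "\<lambda>i. w i x" n] by simp
  ultimately show ?thesis by simp
qed

lemma oscillation_contraction_has_fixed_point:
  fixes T :: "('a::topological_space \<Rightarrow> real) \<Rightarrow> 'a \<Rightarrow> real"
  assumes cpt: "compact (UNIV :: 'a set)" and L: "0 \<le> L" "L < 1"
    and cont: "\<And>u. continuous_on UNIV u \<Longrightarrow> continuous_on UNIV (T u)"
    and norm: "\<And>u. T u x0 = 0"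
    and contr: "oscillation_contraction L T"
  shows "\<exists>W. continuous_on UNIV W \<and> T W = W"
proof -
  define w where "w n = (T ^^ n) (\<lambda>_. 0)" for n
  have w_Suc: "w (Suc n) = T (w n)" for n by (simp add: w_def)
  have wc: "continuous_on UNIV (w n)" for n
    by (induction n) (simp_all add: w_Suc cont, simp add: w_def)
  have w_x0: "w n x0 = 0" for n by (cases n) (simp_all add: w_Suc norm, simp add: w_def)
  have "bounded (range (\<lambda>x. w 1 x - w 0 x))"
    using wc by (intro bounded_range_continuous_on_compact_UNIV[OF cpt] continuous_intros)
  then obtain K where K: "oscillation_le (\<lambda>x. w 1 x - w 0 x) K" by (rule oscillation_le_bounded)
  have osc: "oscillation_le (\<lambda>x. w (Suc n) x - w n x) (L ^ n * K)" for n
  proof (induction n)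
    case (Suc n)
    from oscillation_contractionD[OF contr wc wc this] show ?case
      by (simp add: w_Suc[of "Suc n"] w_Suc[of n] mult.assoc)
  qed (use K in simp)
  have "\<bar>w (Suc n) x - w n x\<bar> \<le> L ^ n * K" for n x
    using abs_le_oscillation_le[OF osc, of n x0 x] by (simp add: w_x0)
  then have lim: "uniform_limit UNIV w (\<lambda>x. w 0 x + (\<Sum>i. w (Suc i) x - w i x)) sequentially"
    by (rule uniform_limit_of_geometric_increments[OF L])
  define W where "W = (\<lambda>x. w 0 x + (\<Sum>i. w (Suc i) x - w i x))"
  have Wc: "continuous_on UNIV W"
    using lim wc unfolding W_def by (intro uniform_limit_theorem[OF always_eventually]) auto
  have close: "\<bar>T W x - W x\<bar> \<le> (2 * L + 1) * e" if "0 < e" for x e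
  proof -
    obtain N where N: "\<And>n y. N \<le> n \<Longrightarrow> \<bar>w n y - W y\<bar> < e"
      using uniform_limitD[OF lim \<open>0 < e\<close>] unfolding eventually_sequentially W_def dist_real_def
      by blast
    have osc_N: "oscillation_le (\<lambda>y. w N y - W y) (2 * e)"
      unfolding oscillation_le_def using N[of N] by (smt (verit) order_refl)
    have "\<bar>T (w N) x - T W x\<bar> \<le> L * (2 * e)"
      using abs_le_oscillation_le[OF oscillation_contractionD[OF contr wc Wc osc_N], of x0 x]
      by (simp add: norm)
    moreover have "\<bar>w (Suc N) x - W x\<bar> \<le> e" using N[of "Suc N" x] by simp
    ultimately show ?thesis by (simp add: w_Suc abs_le_iff algebra_simps)
  qed
  have "T W x = W x" for x
  proof -
    have "\<bar>T W x - W x\<bar> \<le> 0 + e" if "0 < e" for e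
      using close[of "e / (2 * L + 1)" x] that L by simp
    then show ?thesis using field_le_epsilon[of "\<bar>T W x - W x\<bar>" 0] by simp
  qed
  with Wc show ?thesis by blast
qed

text \<open>Without second countability the Borel sets of \<open>X \<times> Y\<close> may exceed the product
  \<open>\<sigma>\<close>-algebra, so measurability of continuous functions is shown by uniform approximation
  with functions that are step functions in \<open>y\<close>: cover \<open>Y\<close> by finitely many open sets on
  which \<open>F(-, y)\<close> is uniformly close to \<open>F(-, y\<^sub>j)\<close> and pick the first such \<open>y\<^sub>j\<close>.\<close>
lemma continuous_on_uniform_approx_measurable_pair:
  fixes F :: "'a::topological_space \<times> 'b::topological_space \<Rightarrow> real"
  assumes cpt: "compact (UNIV :: 'a set)" "compact (UNIV :: 'b set)"
    and sets: "sets M = sets borel" "sets N = sets borel"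
    and F: "continuous_on UNIV F" and "0 < e"
  obtains g where "g \<in> borel_measurable (M \<Otimes>\<^sub>M N)" "\<And>z. \<bar>F z - g z\<bar> < e"
proof -
  have "\<exists>V. open V \<and> y0 \<in> V \<and> (\<forall>y\<in>V. \<forall>x. \<bar>F (x, y) - F (x, y0)\<bar> < e)" for y0
  proof -
    obtain V where "open V" "y0 \<in> V" "\<And>p q. p \<in> V \<Longrightarrow> \<bar>F (q, p) - F (q, y0)\<bar> < e"
      using continuous_on_compact_uniform_in_fibre[OF cpt(1) F \<open>0 < e\<close>, where p\<^sub>0 = y0] by blast
    then show ?thesis by blast
  qed
  then obtain V where V: "\<And>y0. open (V y0)" "\<And>y0. y0 \<in> V y0"
    "\<And>y0 y x. y \<in> V y0 \<Longrightarrow> \<bar>F (x, y) - F (x, y0)\<bar> < e"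
    by metis
  obtain D where "finite D" "UNIV \<subseteq> (\<Union>y0\<in>D. V y0)"
  proof (rule compactE_image[OF cpt(2), of UNIV V])
    show "UNIV \<subseteq> (\<Union>y0\<in>UNIV. V y0)" using V(2) by blast
  qed (use V(1) in auto)
  moreover obtain n pts where "D = pts ` {j. j < (n::nat)}"
    using finite_imp_nat_seg_image_inj_on[OF \<open>finite D\<close>] by blast
  ultimately have cover: "\<exists>j. y \<in> V (pts j)" for y by blast
  define J where "J y = (LEAST j. y \<in> V (pts j))" for y
  have J: "y \<in> V (pts (J y))" for y
    unfolding J_def using cover[of y] by (rule LeastI_ex)
  have J_meas: "J \<in> measurable N (count_space UNIV)"
    unfolding J_def
  proof (rule measurable_Least)
    fix j
    have "V (pts j) \<in> sets N" unfolding sets(2) using V(1) by (rule borel_open)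
    then show "(\<lambda>y. y \<in> V (pts j)) \<in> measurable N (count_space UNIV)"
      by (rule pred_sets2) simp
  qed
  have "(\<lambda>z. F (fst z, pts (J (snd z)))) \<in> borel_measurable (M \<Otimes>\<^sub>M N)"
  proof (rule measurable_compose_countable[where f = "\<lambda>j z. F (fst z, pts j)"])
    fix j
    have "continuous_on UNIV (\<lambda>x. F (x, pts j))"
      by (rule continuous_on_compose2[OF F]) (auto intro!: continuous_intros)
    then have "(\<lambda>x. F (x, pts j)) \<in> borel_measurable M"
      by (rule borel_measurable_continuous_on_UNIV[OF sets(1)])
    then show "(\<lambda>z. F (fst z, pts j)) \<in> borel_measurable (M \<Otimes>\<^sub>M N)"
      by (rule measurable_compose[OF measurable_fst])
    show "(\<lambda>z. J (snd z)) \<in> measurable (M \<Otimes>\<^sub>M N) (count_space UNIV)"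
      by (rule measurable_compose[OF measurable_snd J_meas])
  qed
  moreover have "\<bar>F z - F (fst z, pts (J (snd z)))\<bar> < e" for z
    using V(3)[OF J[of "snd z"], of "fst z"] by simp
  ultimately show ?thesis by (rule that)
qed

lemma borel_measurable_pair_continuous_on:
  fixes F :: "'a::topological_space \<times> 'b::topological_space \<Rightarrow> real"
  assumes cpt: "compact (UNIV :: 'a set)" "compact (UNIV :: 'b set)"
    and sets: "sets M = sets borel" "sets N = sets borel"
    and F: "continuous_on UNIV F"
  shows "F \<in> borel_measurable (M \<Otimes>\<^sub>M N)"
proof -
  have "\<exists>g. g \<in> borel_measurable (M \<Otimes>\<^sub>M N) \<and> (\<forall>z. \<bar>F z - g z\<bar> < inverse (Suc n))" for n :: nat
  proof -
    obtain g where "g \<in> borel_measurable (M \<Otimes>\<^sub>M N)" "\<And>z. \<bar>F z - g z\<bar> < inverse (Suc n)"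
      by (rule continuous_on_uniform_approx_measurable_pair[OF cpt sets F, of "inverse (Suc n)"]) auto
    then show ?thesis by blast
  qed
  then obtain g where g: "\<And>n. g n \<in> borel_measurable (M \<Otimes>\<^sub>M N)"
    "\<And>n z. \<bar>F z - g n z\<bar> < inverse (Suc n)"
    by metis
  show ?thesis
  proof (rule borel_measurable_LIMSEQ_real[OF _ g(1)])
    fix z
    have "(\<lambda>n. g n z - F z) \<longlonglongrightarrow> 0"
      using g(2) by (intro Lim_null_comparison[OF _ LIMSEQ_inverse_real_of_nat] always_eventually)
        (simp add: abs_minus_commute less_imp_le)
    from tendsto_add[OF this tendsto_const[of "F z"]] show "(\<lambda>n. g n z) \<longlonglongrightarrow> F z" by simp
  qed
qed

lemma integral_swap_continuous_on:
  fixes F :: "'a::topological_space \<times> 'b::topological_space \<Rightarrow> real"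
  assumes cpt: "compact (UNIV :: 'a set)" "compact (UNIV :: 'b set)"
    and M: "prob_space M" "sets M = sets borel" and N: "prob_space N" "sets N = sets borel"
    and F: "continuous_on UNIV F"
  shows "(\<integral>y. (\<integral>x. F (x, y) \<partial>M) \<partial>N) = (\<integral>x. (\<integral>y. F (x, y) \<partial>N) \<partial>M)"
proof -
  interpret pair_prob_space M N
    using M(1) N(1) by (intro pair_prob_space.intro pair_sigma_finite.intro prob_space_imp_sigma_finite)
  have "compact (UNIV :: ('a \<times> 'b) set)" using compact_Times[OF cpt] by simp
  then obtain B where "\<And>z. \<bar>F z\<bar> \<le> B"
    using bounded_range_abs_le[OF bounded_range_continuous_on_compact_UNIV[OF _ F]] by blast
  then have "integrable (M \<Otimes>\<^sub>M N) F"
    by (intro integrable_const_bound[where B = B] AE_I2 borel_measurable_pair_continuous_on cpt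
        M(2) N(2) F) simp
  then show ?thesis using Fubini_integral[of "\<lambda>x y. F (x, y)"] by simp
qed

lemma v_of_eq_log_integral_exp: "v_of c \<mu> u y = log_integral_exp \<mu> (\<lambda>x. - c (x, y) - u x)"
  by (simp add: v_of_def log_integral_exp_def)

lemma u_of_eq_log_integral_exp: "u_of c \<nu> v x = log_integral_exp \<nu> (\<lambda>y. - c (x, y) - v y)"
  by (simp add: u_of_def log_integral_exp_def)

locale entropic_transport =
  fixes \<mu> :: "'a::topological_space measure" and \<nu> :: "'b::topological_space measure"
    and c :: "'a \<times> 'b \<Rightarrow> real"
  assumes compact_X: "compact (UNIV :: 'a set)" and compact_Y: "compact (UNIV :: 'b set)"
    and prob_\<mu>: "prob_space \<mu>" and sets_\<mu>: "sets \<mu> = sets borel"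
    and prob_\<nu>: "prob_space \<nu>" and sets_\<nu>: "sets \<nu> = sets borel"
    and continuous_c: "continuous_on UNIV c"
begin

lemma continuous_on_swap_cost: "continuous_on UNIV (\<lambda>z :: 'b \<times> 'a. c (snd z, fst z))"
  by (rule continuous_on_compose2[OF continuous_c]) (auto intro!: continuous_intros)

lemma continuous_on_v_of:
  assumes "continuous_on UNIV u"
  shows "continuous_on UNIV (v_of c \<mu> u)"
proof -
  have "continuous_on UNIV (\<lambda>y. log_integral_exp \<mu> (\<lambda>x. - c (x, y) - u x))"
    using continuous_on_log_integral_exp[OF prob_\<mu> compact_X sets_\<mu> _
        borel_measurable_continuous_on_UNIV[OF sets_\<mu> assms]
        bounded_range_continuous_on_compact_UNIV[OF compact_X assms], of "\<lambda>z. - c z"]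
      continuous_c by (simp add: continuous_on_minus)
  then show ?thesis by (simp add: v_of_eq_log_integral_exp[abs_def])
qed

lemma continuous_on_u_of:
  assumes "continuous_on UNIV v"
  shows "continuous_on UNIV (u_of c \<nu> v)"
proof -
  have "continuous_on UNIV (\<lambda>x. log_integral_exp \<nu> (\<lambda>y. - c (x, y) - v y))"
    using continuous_on_log_integral_exp[OF prob_\<nu> compact_Y sets_\<nu> _
        borel_measurable_continuous_on_UNIV[OF sets_\<nu> assms]
        bounded_range_continuous_on_compact_UNIV[OF compact_Y assms], of "\<lambda>z. - c (snd z, fst z)"]
      continuous_on_swap_cost by (simp add: continuous_on_minus)
  then show ?thesis by (simp add: u_of_eq_log_integral_exp[abs_def])
qed

lemma continuous_on_S_op: "continuous_on UNIV u \<Longrightarrow> continuous_on UNIV (S_op c \<mu> \<nu> u)"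
  unfolding S_op_def by (intro continuous_on_u_of continuous_on_v_of)

lemma cost_bounded:
  obtains C where "\<And>z. \<bar>c z\<bar> \<le> C"
proof -
  have "compact (UNIV :: ('a \<times> 'b) set)" using compact_Times[OF compact_X compact_Y] by simp
  then have "bounded (range c)" by (rule bounded_range_continuous_on_compact_UNIV[OF _ continuous_c])
  then show ?thesis using bounded_range_abs_le that by blast
qed

lemma v_of_oscillation_le:
  assumes C: "\<And>z. \<bar>c z\<bar> \<le> C"
    and a: "continuous_on UNIV a" and b: "continuous_on UNIV b"
    and osc: "oscillation_le (\<lambda>x. a x - b x) K"
  shows "oscillation_le (\<lambda>y. v_of c \<mu> a y - v_of c \<mu> b y) ((1 - exp (-4 * C)) * K)"
proof -
  have "(\<lambda>x. - c (x, y)) \<in> borel_measurable \<mu>" for y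
    by (intro borel_measurable_continuous_on_UNIV[OF sets_\<mu>] continuous_on_compose2[OF continuous_c]
        continuous_intros) auto
  from prob_space.log_integral_exp_kernel_oscillation[OF prob_\<mu> this _
      borel_measurable_continuous_on_UNIV[OF sets_\<mu> a] bounded_range_continuous_on_compact_UNIV[OF compact_X a]
      borel_measurable_continuous_on_UNIV[OF sets_\<mu> b] bounded_range_continuous_on_compact_UNIV[OF compact_X b]
      osc]
  show ?thesis using C by (simp add: v_of_eq_log_integral_exp)
qed

lemma u_of_oscillation_le:
  assumes C: "\<And>z. \<bar>c z\<bar> \<le> C"
    and a: "continuous_on UNIV a" and b: "continuous_on UNIV b"
    and osc: "oscillation_le (\<lambda>y. a y - b y) K"
  shows "oscillation_le (\<lambda>x. u_of c \<nu> a x - u_of c \<nu> b x) ((1 - exp (-4 * C)) * K)"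
proof -
  have kernel: "(\<lambda>y. - c (x, y)) \<in> borel_measurable \<nu>" for x
    by (intro borel_measurable_continuous_on_UNIV[OF sets_\<nu>] continuous_on_compose2[OF continuous_c]
        continuous_intros) auto
  from prob_space.log_integral_exp_kernel_oscillation[OF prob_\<nu>, of "\<lambda>z. - c (snd z, fst z)", OF _ _
      borel_measurable_continuous_on_UNIV[OF sets_\<nu> a] bounded_range_continuous_on_compact_UNIV[OF compact_Y a]
      borel_measurable_continuous_on_UNIV[OF sets_\<nu> b] bounded_range_continuous_on_compact_UNIV[OF compact_Y b]
      osc]
  show ?thesis using C kernel by (simp add: u_of_eq_log_integral_exp)
qed

lemma S_op_oscillation_contraction: "\<exists>L. 0 \<le> L \<and> L < 1 \<and> oscillation_contraction L (S_op c \<mu> \<nu>)"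
proof -
  obtain C where C: "\<And>z. \<bar>c z\<bar> \<le> C" using cost_bounded by blast
  define \<kappa> where "\<kappa> = 1 - exp (-4 * C)"
  have "0 \<le> C" using C[of undefined] by linarith
  then have \<kappa>: "0 \<le> \<kappa>" "\<kappa> < 1" unfolding \<kappa>_def by auto
  have "oscillation_contraction (\<kappa> * \<kappa>) (S_op c \<mu> \<nu>)"
    unfolding oscillation_contraction_def
  proof (intro allI impI)
    fix a b :: "'a \<Rightarrow> real" and K :: real
    assume a: "continuous_on UNIV a" and b: "continuous_on UNIV b"
      and "oscillation_le (\<lambda>x. a x - b x) K"
    then have "oscillation_le (\<lambda>y. v_of c \<mu> a y - v_of c \<mu> b y) (\<kappa> * K)"
      unfolding \<kappa>_def by (rule v_of_oscillation_le[OF C])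
    from u_of_oscillation_le[OF C continuous_on_v_of[OF a] continuous_on_v_of[OF b] this]
    show "oscillation_le (\<lambda>x. S_op c \<mu> \<nu> a x - S_op c \<mu> \<nu> b x) (\<kappa> * \<kappa> * K)"
      by (simp add: S_op_def \<kappa>_def mult.assoc)
  qed
  with \<kappa> show ?thesis by (intro exI[of _ "\<kappa> * \<kappa>"]) (auto simp: mult_le_one mult_less_cancel_right1
        intro: le_less_trans[OF mult_left_le_one_le])
qed

lemma bounded_measurable_cost_slices:
  assumes "continuous_on UNIV u" "continuous_on UNIV v"
  shows "(\<lambda>x. - c (x, y) - u x) \<in> borel_measurable \<mu>" "bounded (range (\<lambda>x. - c (x, y) - u x))"
    and "(\<lambda>y. - c (x, y) - v y) \<in> borel_measurable \<nu>" "bounded (range (\<lambda>y. - c (x, y) - v y))"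
proof -
  have "continuous_on UNIV (\<lambda>x. c (x, y))" "continuous_on UNIV (\<lambda>y. c (x, y))"
    by (rule continuous_on_compose2[OF continuous_c]; auto intro!: continuous_intros)+
  then have cx: "continuous_on UNIV (\<lambda>x. - c (x, y) - u x)" and cy: "continuous_on UNIV (\<lambda>y. - c (x, y) - v y)"
    using assms by (auto intro: continuous_intros)
  show "(\<lambda>x. - c (x, y) - u x) \<in> borel_measurable \<mu>" "bounded (range (\<lambda>x. - c (x, y) - u x))"
    using borel_measurable_continuous_on_UNIV[OF sets_\<mu> cx]
      bounded_range_continuous_on_compact_UNIV[OF compact_X cx] by auto
  show "(\<lambda>y. - c (x, y) - v y) \<in> borel_measurable \<nu>" "bounded (range (\<lambda>y. - c (x, y) - v y))"
    using borel_measurable_continuous_on_UNIV[OF sets_\<nu> cy]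
      bounded_range_continuous_on_compact_UNIV[OF compact_Y cy] by auto
qed

lemma S_op_shift_fixed_point_const_eq_0:
  assumes W: "continuous_on UNIV W" and shift: "\<And>x. S_op c \<mu> \<nu> W x = W x + k"
  shows "k = 0"
proof -
  define v where "v = v_of c \<mu> W"
  have v: "continuous_on UNIV v" unfolding v_def using W by (rule continuous_on_v_of)
  define F where "F z = exp (- c z - W (fst z) - v (snd z))" for z
  have "continuous_on UNIV (\<lambda>z. W (fst z))" "continuous_on UNIV (\<lambda>z. v (snd z))"
    by (rule continuous_on_compose2[OF W] continuous_on_compose2[OF v]; auto intro!: continuous_intros)+
  then have "continuous_on UNIV F"
    unfolding F_def using continuous_c by (intro continuous_intros)
  then have "(\<integral>y. (\<integral>x. F (x, y) \<partial>\<mu>) \<partial>\<nu>) = (\<integral>x. (\<integral>y. F (x, y) \<partial>\<nu>) \<partial>\<mu>)"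
    by (rule integral_swap_continuous_on[OF compact_X compact_Y prob_\<mu> sets_\<mu> prob_\<nu> sets_\<nu>])
  moreover have "(\<integral>x. F (x, y) \<partial>\<mu>) = 1" for y
  proof -
    have "(\<integral>x. F (x, y) \<partial>\<mu>) = (\<integral>x. exp (- c (x, y) - W x) * exp (- v y) \<partial>\<mu>)"
      by (intro Bochner_Integration.integral_cong) (simp_all add: F_def algebra_simps flip: exp_add)
    also have "\<dots> = (\<integral>x. exp (- c (x, y) - W x) \<partial>\<mu>) * exp (- v y)" by simp
    also have "(\<integral>x. exp (- c (x, y) - W x) \<partial>\<mu>) = exp (v y)"
      unfolding v_def v_of_eq_log_integral_exp
      by (rule prob_space.exp_log_integral_exp[OF prob_\<mu> bounded_measurable_cost_slices(1,2)[OF W v], symmetric])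
    finally show ?thesis by (simp add: exp_minus)
  qed
  moreover have "(\<integral>y. F (x, y) \<partial>\<nu>) = exp k" for x
  proof -
    have "(\<integral>y. F (x, y) \<partial>\<nu>) = (\<integral>y. exp (- c (x, y) - v y) * exp (- W x) \<partial>\<nu>)"
      by (intro Bochner_Integration.integral_cong) (simp_all add: F_def algebra_simps flip: exp_add)
    also have "\<dots> = (\<integral>y. exp (- c (x, y) - v y) \<partial>\<nu>) * exp (- W x)" by simp
    also have "(\<integral>y. exp (- c (x, y) - v y) \<partial>\<nu>) = exp (S_op c \<mu> \<nu> W x)"
      unfolding S_op_def u_of_eq_log_integral_exp v_def[symmetric]
      by (rule prob_space.exp_log_integral_exp[OF prob_\<nu> bounded_measurable_cost_slices(3,4)[OF W v], symmetric])
    finally show ?thesis by (simp add: shift exp_add exp_minus)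
  qed
  ultimately have "1 = exp k"
    using prob_space.prob_space[OF prob_\<mu>] prob_space.prob_space[OF prob_\<nu>] by simp
  then show "k = 0" by simp
qed

lemma S_op_has_continuous_fixed_point: "\<exists>u. continuous_on UNIV u \<and> S_op c \<mu> \<nu> u = u"
proof -
  obtain L where L: "0 \<le> L" "L < 1" and contr: "oscillation_contraction L (S_op c \<mu> \<nu>)"
    using S_op_oscillation_contraction by blast
  define x0 :: 'a where "x0 = undefined"
  define T where "T u x = S_op c \<mu> \<nu> u x - S_op c \<mu> \<nu> u x0" for u x
  have contr_T: "oscillation_contraction L T"
    unfolding oscillation_contraction_def
  proof (intro allI impI)
    fix a b :: "'a \<Rightarrow> real" and K :: real
    assume ab: "continuous_on UNIV a" "continuous_on UNIV b" "oscillation_le (\<lambda>x. a x - b x) K"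
    have "(\<lambda>x. T a x - T b x)
        = (\<lambda>x. (S_op c \<mu> \<nu> a x - S_op c \<mu> \<nu> b x) - (S_op c \<mu> \<nu> a x0 - S_op c \<mu> \<nu> b x0))"
      unfolding T_def by (rule ext) linarith
    with oscillation_contractionD[OF contr ab]
    show "oscillation_le (\<lambda>x. T a x - T b x) (L * K)" by simp
  qed
  have cont_T: "continuous_on UNIV (T u)" if "continuous_on UNIV u" for u
    unfolding T_def by (intro continuous_intros continuous_on_S_op that)
  have norm_T: "T u x0 = 0" for u by (simp add: T_def)
  obtain W where W: "continuous_on UNIV W" "T W = W"
    using oscillation_contraction_has_fixed_point[OF compact_X L cont_T norm_T contr_T] by blast
  have shift: "S_op c \<mu> \<nu> W x = W x + S_op c \<mu> \<nu> W x0" for x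
    using fun_cong[OF W(2), of x] unfolding T_def by simp
  have "S_op c \<mu> \<nu> W x0 = 0" by (rule S_op_shift_fixed_point_const_eq_0[OF W(1) shift])
  with shift have "S_op c \<mu> \<nu> W x = W x" for x by (metis add_0_right)
  then have "S_op c \<mu> \<nu> W = W" ..
  with W(1) show ?thesis by blast
qed

lemma S_op_fixed_points_differ_by_const:
  assumes "continuous_on UNIV u1" "S_op c \<mu> \<nu> u1 = u1" "continuous_on UNIV u2" "S_op c \<mu> \<nu> u2 = u2"
  shows "\<exists>k. \<forall>x. u1 x = u2 x + k"
proof -
  obtain L where "L < 1" "oscillation_contraction L (S_op c \<mu> \<nu>)"
    using S_op_oscillation_contraction by blast
  then show ?thesis
    by (intro oscillation_contraction_fixed_points_differ_by_const[OF compact_X _ _ assms])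
qed

end

theorem proposition2p7:
  fixes \<mu> :: "'a::topological_space measure" and \<nu> :: "'b::topological_space measure"
    and c :: "'a \<times> 'b \<Rightarrow> real"
  assumes "compact (UNIV :: 'a set)" and "compact (UNIV :: 'b set)"
    and "prob_space \<mu>" and "sets \<mu> = sets borel"
    and "prob_space \<nu>" and "sets \<nu> = sets borel"
    and "continuous_on UNIV c"
  shows "(\<exists>u. continuous_on UNIV u \<and> S_op c \<mu> \<nu> u = u)
    \<and> (\<forall>u1 u2. continuous_on UNIV u1 \<and> continuous_on UNIV u2
          \<and> S_op c \<mu> \<nu> u1 = u1 \<and> S_op c \<mu> \<nu> u2 = u2
          \<longrightarrow> (\<exists>k::real. AE x in \<mu>. u1 x = u2 x + k))
    \<and> (\<forall>u1 u2. u1 \<in> S_op c \<mu> \<nu> ` {w. continuous_on UNIV w}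
          \<and> u2 \<in> S_op c \<mu> \<nu> ` {w. continuous_on UNIV w}
          \<and> S_op c \<mu> \<nu> u1 = u1 \<and> S_op c \<mu> \<nu> u2 = u2
          \<longrightarrow> (\<exists>k::real. \<forall>x. u1 x = u2 x + k))"
proof -
  interpret entropic_transport \<mu> \<nu> c by (rule entropic_transport.intro[OF assms])
  show ?thesis
  proof (intro conjI allI impI)
    show "\<exists>u. continuous_on UNIV u \<and> S_op c \<mu> \<nu> u = u" by (rule S_op_has_continuous_fixed_point)
  next
    fix u1 u2 :: "'a \<Rightarrow> real"
    assume "continuous_on UNIV u1 \<and> continuous_on UNIV u2 \<and> S_op c \<mu> \<nu> u1 = u1 \<and> S_op c \<mu> \<nu> u2 = u2"
    then obtain k where "\<forall>x. u1 x = u2 x + k" using S_op_fixed_points_differ_by_const by blast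
    then show "\<exists>k. AE x in \<mu>. u1 x = u2 x + k" by (intro exI[of _ k] AE_I2) simp
  next
    fix u1 u2 :: "'a \<Rightarrow> real"
    assume fixed: "u1 \<in> S_op c \<mu> \<nu> ` {w. continuous_on UNIV w} \<and> u2 \<in> S_op c \<mu> \<nu> ` {w. continuous_on UNIV w}
      \<and> S_op c \<mu> \<nu> u1 = u1 \<and> S_op c \<mu> \<nu> u2 = u2"
    then have "continuous_on UNIV u1" "continuous_on UNIV u2" using continuous_on_S_op by auto
    with fixed show "\<exists>k. \<forall>x. u1 x = u2 x + k" using S_op_fixed_points_differ_by_const by blast
  qed
qed

end
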